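(* Assume the setting below (in particular Assumption 1), with $\nu\in(0,1)$, $\mu>0$, $\beta>0$, and let $\theta^*$ be any minimizer over $\Theta$ of $\theta\mapsto\tilde{\mathsf R}(\theta)+\mu V(\theta)+\frac{\beta}{n}K(\theta)$. Then for every $\theta\in\Theta$, $$\tilde{\mathsf R}(\theta)-\tilde{\mathsf R}(\theta^* )\ge\mu\big(V(\theta^* )-V(\theta)\big)+\frac{\beta}{n}\big(K(\theta^* )-K(\theta)\big)+\Big(\frac{(1-\nu)C_\ell}{2}-\mu\Big)\|f_\theta-f_{\theta^*}\|_2^2 .$$
   Context: Setting: $(X,Y)$ random pair in $\mathcal X\times\mathbb R$ with $|Y|\le b$ a.s. ($b>0$); $f_1,\dots,f_M$ deterministic measurable functions with $\max_j|f_j(X)|\le b$ a.s.; $\Theta=\{\theta\in\mathbb R^M:\theta_j\ge0,\ \sum_j\theta_j=1\}$, $f_\theta=\sum_j\theta_jf_j$, $e_1,\dots,e_M$ the canonical basis of $\mathbb R^M$; $\|f\|_2=\sqrt{\mathbb E f(X)^2}$; prior $\pi$ with $\pi_j>0$, $\sum_j\pi_j=1$; $n\ge1$ an integer. Assumption 1: for all $f,g\in[-b,b]$, $|\ell(Y,f)-\ell(Y,g)|\le C_b|f-g|$ a.s.; and a.s. $\ell(Y,\cdot)$ is strongly convex on $[-b,b]$ with modulus $C_\ell>0$, i.e. $\ell(Y,\alpha a+(1-\alpha)a')\le\alpha\ell(Y,a)+(1-\alpha)\ell(Y,a')-\frac{C_\ell}2\alpha(1-\alpha)(a-a')^2$ for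 $a,a'\in[-b,b]$, $\alpha\in(0,1)$. Notation: $\ell_\theta(y,x)=\ell(y,f_\theta(x))$, $\mathsf R(\theta)=\mathbb E\,\ell(Y,f_\theta(X))$; $\tilde\ell_\theta=(1-\nu)\ell_\theta+\nu\sum_j\theta_j\ell_{e_j}$ and $\tilde{\mathsf R}(\theta)=\mathbb E\,\tilde\ell_\theta(Y,X)=(1-\nu)\mathsf R(\theta)+\nu\sum_j\theta_j\mathsf R(e_j)$; $K(\theta)=\sum_j\theta_j\log(1/\pi_j)$; $V(\theta)=\sum_j\theta_j\|f_j-f_\theta\|_2^2$. *)

theory Defs
  imports "HOL-Probability.Probability"
begin

definition Simplex :: "nat \<Rightarrow> (nat \<Rightarrow> real) set" where
  "Simplex M = {\<theta>. (\<forall>j<M. 0 \<le> \<theta> j) \<and> (\<Sum>j<M. \<theta> j) = 1}"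

definition basis_vec :: "nat \<Rightarrow> nat \<Rightarrow> real" where
  "basis_vec j = (\<lambda>i. if i = j then 1 else 0)"

definition agg :: "(nat \<Rightarrow> 'x \<Rightarrow> real) \<Rightarrow> nat \<Rightarrow> (nat \<Rightarrow> real) \<Rightarrow> 'x \<Rightarrow> real" where
  "agg f M \<theta> x = (\<Sum>j<M. \<theta> j * f j x)"

definition risk :: "'o measure \<Rightarrow> ('o \<Rightarrow> 'x) \<Rightarrow> ('o \<Rightarrow> real) \<Rightarrow> (real \<Rightarrow> real \<Rightarrow> real)
    \<Rightarrow> (nat \<Rightarrow> 'x \<Rightarrow> real) \<Rightarrow> nat \<Rightarrow> (nat \<Rightarrow> real) \<Rightarrow> real" where
  "risk P X Y ell f M \<theta> = (\<integral>\<omega>. ell (Y \<omega>) (agg f M \<theta> (X \<omega>)) \<partial>P)"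

definition risk_tilde :: "'o measure \<Rightarrow> ('o \<Rightarrow> 'x) \<Rightarrow> ('o \<Rightarrow> real) \<Rightarrow> (real \<Rightarrow> real \<Rightarrow> real)
    \<Rightarrow> (nat \<Rightarrow> 'x \<Rightarrow> real) \<Rightarrow> nat \<Rightarrow> real \<Rightarrow> (nat \<Rightarrow> real) \<Rightarrow> real" where
  "risk_tilde P X Y ell f M \<nu> \<theta> =
     (1 - \<nu>) * risk P X Y ell f M \<theta> + \<nu> * (\<Sum>j<M. \<theta> j * risk P X Y ell f M (basis_vec j))"

definition Kdiv :: "(nat \<Rightarrow> real) \<Rightarrow> nat \<Rightarrow> (nat \<Rightarrow> real) \<Rightarrow> real" where
  "Kdiv \<pi> M \<theta> = (\<Sum>j<M. \<theta> j * ln (1 / \<pi> j))"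

definition sqnorm :: "'o measure \<Rightarrow> ('o \<Rightarrow> 'x) \<Rightarrow> ('x \<Rightarrow> real) \<Rightarrow> real" where
  "sqnorm P X g = (\<integral>\<omega>. (g (X \<omega>))\<^sup>2 \<partial>P)"

definition Vvar :: "'o measure \<Rightarrow> ('o \<Rightarrow> 'x) \<Rightarrow> (nat \<Rightarrow> 'x \<Rightarrow> real) \<Rightarrow> nat \<Rightarrow> (nat \<Rightarrow> real) \<Rightarrow> real" where
  "Vvar P X f M \<theta> = (\<Sum>j<M. \<theta> j * sqnorm P X (\<lambda>x. f j x - agg f M \<theta> x))"

end

theory Submission imports Defs begin

text \<open>Along the segment \<open>\<theta>\<^sub>\<alpha> = \<alpha>\<theta> + (1-\<alpha>)\<theta>*\<close> the objective
  \<open>G = R\<^sup>~ + \<mu>V + (\<beta>/n)K\<close> satisfies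
  \<open>G(\<theta>\<^sub>\<alpha>) \<le> \<alpha>G(\<theta>) + (1-\<alpha>)G(\<theta>*) - \<alpha>(1-\<alpha>)((1-\<nu>)C\<^sub>\<ell>/2 - \<mu>)\<parallel>f\<^sub>\<theta> - f\<^sub>\<theta>\<^sub>*\<parallel>\<^sup>2\<close>:
  \<open>K\<close> and the \<open>\<nu>\<close>-part of \<open>R\<^sup>~\<close> are linear, \<open>R\<close> inherits strong convexity from the loss,
  and \<open>V\<close> is a weighted variance, which is concave along segments with the exact defect
  \<open>\<alpha>(1-\<alpha>)\<parallel>f\<^sub>\<theta> - f\<^sub>\<theta>\<^sub>*\<parallel>\<^sup>2\<close>. Comparing with \<open>G(\<theta>*) \<le> G(\<theta>\<^sub>\<alpha>)\<close>, dividing by \<open>\<alpha>\<close>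
  and letting \<open>\<alpha> \<rightarrow> 0\<close> gives the claim.\<close>

lemma sum_convex_comb_mult:
  fixes t s r :: "nat \<Rightarrow> real"
  shows "(\<Sum>j<M. (\<alpha> * t j + (1 - \<alpha>) * s j) * r j)
       = \<alpha> * (\<Sum>j<M. t j * r j) + (1 - \<alpha>) * (\<Sum>j<M. s j * r j)"
proof -
  have "(\<Sum>j<M. (\<alpha> * t j + (1 - \<alpha>) * s j) * r j)
      = (\<Sum>j<M. \<alpha> * (t j * r j) + (1 - \<alpha>) * (s j * r j))"
    by (simp add: algebra_simps)
  thus ?thesis by (simp add: sum.distrib sum_distrib_left)
qed

lemma weighted_variance_eq:
  fixes t a :: "nat \<Rightarrow> real"
  assumes "(\<Sum>j<M. t j) = 1"
  shows "(\<Sum>j<M. t j * (a j - (\<Sum>i<M. t i * a i))\<^sup>2)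
       = (\<Sum>j<M. t j * (a j)\<^sup>2) - (\<Sum>i<M. t i * a i)\<^sup>2"
proof -
  define c where "c = (\<Sum>i<M. t i * a i)"
  have "(\<Sum>j<M. t j * (a j - c)\<^sup>2) = (\<Sum>j<M. t j * (a j)\<^sup>2 - 2 * c * (t j * a j) + c\<^sup>2 * t j)"
    by (rule sum.cong) (auto simp: power2_eq_square algebra_simps)
  also have "\<dots> = (\<Sum>j<M. t j * (a j)\<^sup>2) - c\<^sup>2"
    by (simp add: sum.distrib sum_subtractf sum_distrib_left[symmetric] c_def assms power2_eq_square)
  finally show ?thesis by (simp add: c_def)
qed

lemma weighted_variance_convex_comb:
  fixes t s a :: "nat \<Rightarrow> real" and \<alpha> :: real
  assumes "(\<Sum>j<M. t j) = 1" and "(\<Sum>j<M. s j) = 1"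
  defines "u \<equiv> \<lambda>j. \<alpha> * t j + (1 - \<alpha>) * s j"
  shows "(\<Sum>j<M. u j * (a j - (\<Sum>i<M. u i * a i))\<^sup>2)
       = \<alpha> * (\<Sum>j<M. t j * (a j - (\<Sum>i<M. t i * a i))\<^sup>2)
         + (1 - \<alpha>) * (\<Sum>j<M. s j * (a j - (\<Sum>i<M. s i * a i))\<^sup>2)
         + \<alpha> * (1 - \<alpha>) * ((\<Sum>i<M. t i * a i) - (\<Sum>i<M. s i * a i))\<^sup>2"
proof -
  have u_sum: "(\<Sum>j<M. u j) = 1"
    using sum_convex_comb_mult[where \<alpha> = \<alpha> and t = t and s = s and M = M and r = "\<lambda>_. 1"] assms
    by (simp add: u_def)
  have lin: "(\<Sum>j<M. u j * g j) = \<alpha> * (\<Sum>j<M. t j * g j) + (1 - \<alpha>) * (\<Sum>j<M. s j * g j)"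
    for g
    unfolding u_def by (rule sum_convex_comb_mult)
  have "(\<Sum>j<M. u j * (a j - (\<Sum>i<M. u i * a i))\<^sup>2)
      = (\<Sum>j<M. u j * (a j)\<^sup>2) - (\<Sum>i<M. u i * a i)\<^sup>2"
    by (rule weighted_variance_eq[OF u_sum])
  also have "\<dots> = \<alpha> * (\<Sum>j<M. t j * (a j)\<^sup>2) + (1 - \<alpha>) * (\<Sum>j<M. s j * (a j)\<^sup>2)
      - (\<alpha> * (\<Sum>j<M. t j * a j) + (1 - \<alpha>) * (\<Sum>j<M. s j * a j))\<^sup>2"
    by (simp only: lin)
  finally show ?thesis
    unfolding weighted_variance_eq[OF assms(1)] weighted_variance_eq[OF assms(2)]
    by (simp add: power2_eq_square algebra_simps)
qed

lemma Simplex_convex_comb: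
  assumes "\<theta> \<in> Simplex M" "\<theta>' \<in> Simplex M" "\<alpha> \<in> {0..1}"
  shows "(\<lambda>j. \<alpha> * \<theta> j + (1 - \<alpha>) * \<theta>' j) \<in> Simplex M"
  using assms sum_convex_comb_mult[where \<alpha> = \<alpha> and t = \<theta> and s = \<theta>' and M = M and r = "\<lambda>_. 1"]
  by (auto simp: Simplex_def)

lemma Simplex_member_imp_pos: "\<theta> \<in> Simplex M \<Longrightarrow> 0 < M"
  by (cases M) (auto simp: Simplex_def)

lemma agg_convex_comb:
  "agg f M (\<lambda>j. \<alpha> * \<theta> j + (1 - \<alpha>) * \<theta>' j) x = \<alpha> * agg f M \<theta> x + (1 - \<alpha>) * agg f M \<theta>' x"
  unfolding agg_def by (rule sum_convex_comb_mult)

lemma Kdiv_convex_comb: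
  "Kdiv \<pi> M (\<lambda>j. \<alpha> * \<theta> j + (1 - \<alpha>) * \<theta>' j) = \<alpha> * Kdiv \<pi> M \<theta> + (1 - \<alpha>) * Kdiv \<pi> M \<theta>'"
  unfolding Kdiv_def by (rule sum_convex_comb_mult)

lemma gap_ge_of_segment_bound:
  fixes a m c :: real
  assumes "\<And>\<alpha>. \<alpha> \<in> {0<..<1} \<Longrightarrow> m \<le> \<alpha> * a + (1 - \<alpha>) * m - \<alpha> * (1 - \<alpha>) * c"
  shows "c \<le> a - m"
proof -
  have "(1 - \<alpha>) * c \<le> a - m" if "\<alpha> \<in> {0<..<1}" for \<alpha>
  proof -
    have "\<alpha> * ((1 - \<alpha>) * c) \<le> \<alpha> * (a - m)"
      using assms[OF that] by (simp add: algebra_simps)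
    thus ?thesis using that by simp
  qed
  hence "\<forall>\<^sub>F \<alpha> in at_right 0. (1 - \<alpha>) * c \<le> a - m"
    using eventually_at_right_real[of 0 1] by (auto elim: eventually_mono)
  moreover have "((\<lambda>\<alpha>. (1 - \<alpha>) * c) \<longlongrightarrow> (1 - 0) * c) (at_right 0)"
    by (intro tendsto_intros)
  ultimately show ?thesis
    using tendsto_le[OF trivial_limit_at_right_real tendsto_const] by fastforce
qed

lemma (in finite_measure) integrable_square_of_AE_bounded:
  fixes g :: "'a \<Rightarrow> real"
  assumes "g \<in> borel_measurable M" and "AE x in M. \<bar>g x\<bar> \<le> B"
  shows "integrable M (\<lambda>x. (g x)\<^sup>2)"
proof (rule integrable_const_bound[where B = "B\<^sup>2"])
  show "AE x in M. norm ((g x)\<^sup>2) \<le> B\<^sup>2"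
    using assms(2)
  proof eventually_elim
    case (elim x)
    have "\<bar>g x\<bar>\<^sup>2 \<le> B\<^sup>2" by (rule power_mono[OF elim]) simp
    thus ?case by simp
  qed
qed (use assms(1) in simp)

locale aggregation_setting = prob_space P
  for P :: "'o measure" and Mx :: "'x measure" and X :: "'o \<Rightarrow> 'x" and Y :: "'o \<Rightarrow> real"
    and f :: "nat \<Rightarrow> 'x \<Rightarrow> real" and M :: nat and ell :: "real \<Rightarrow> real \<Rightarrow> real"
    and b C_b C_ell :: real +
  assumes X_meas: "X \<in> measurable P Mx"
    and Y_meas: "Y \<in> borel_measurable P"
    and f_meas: "\<And>j. j < M \<Longrightarrow> f j \<in> borel_measurable Mx"
    and ell_meas: "(\<lambda>(y, a). ell y a) \<in> borel_measurable borel"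
    and b_pos: "b > 0"
    and f_bdd: "AE \<omega> in P. \<forall>j<M. \<bar>f j (X \<omega>)\<bar> \<le> b"
    and risk_int: "\<And>j. j < M \<Longrightarrow> integrable P (\<lambda>\<omega>. ell (Y \<omega>) (f j (X \<omega>)))"
    and lipschitz: "AE \<omega> in P. \<forall>a\<in>{-b..b}. \<forall>a'\<in>{-b..b}.
                      \<bar>ell (Y \<omega>) a - ell (Y \<omega>) a'\<bar> \<le> C_b * \<bar>a - a'\<bar>"
    and strong_convex: "AE \<omega> in P. \<forall>a\<in>{-b..b}. \<forall>a'\<in>{-b..b}. \<forall>\<alpha>\<in>{0<..<1}.
          ell (Y \<omega>) (\<alpha> * a + (1 - \<alpha>) * a')
            \<le> \<alpha> * ell (Y \<omega>) a + (1 - \<alpha>) * ell (Y \<omega>) a' - C_ell / 2 * \<alpha> * (1 - \<alpha>) * (a - a')\<^sup>2"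
begin

lemma component_measurable: "j < M \<Longrightarrow> (\<lambda>\<omega>. f j (X \<omega>)) \<in> borel_measurable P"
  by (rule measurable_compose[OF X_meas f_meas])

lemma agg_measurable: "(\<lambda>\<omega>. agg f M \<theta> (X \<omega>)) \<in> borel_measurable P"
  unfolding agg_def by (intro borel_measurable_sum borel_measurable_times
      borel_measurable_const component_measurable) auto

lemma loss_measurable:
  assumes "g \<in> borel_measurable P"
  shows "(\<lambda>\<omega>. ell (Y \<omega>) (g \<omega>)) \<in> borel_measurable P"
proof -
  have "(\<lambda>(y, a). ell y a) \<in> borel_measurable (borel \<Otimes>\<^sub>M borel)"
    using ell_meas unfolding borel_prod .
  thus ?thesis using Y_meas assms by (rule measurable_Pair_compose_split)
qed

lemma agg_bounded_AE:
  assumes "\<theta> \<in> Simplex M"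
  shows "AE \<omega> in P. \<bar>agg f M \<theta> (X \<omega>)\<bar> \<le> b"
  using f_bdd
proof eventually_elim
  case (elim \<omega>)
  have "\<bar>agg f M \<theta> (X \<omega>)\<bar> \<le> (\<Sum>j<M. \<bar>\<theta> j * f j (X \<omega>)\<bar>)"
    unfolding agg_def by (rule sum_abs)
  also have "\<dots> \<le> (\<Sum>j<M. \<theta> j * b)"
    using assms elim by (intro sum_mono) (auto simp: Simplex_def abs_mult mult_left_mono)
  also have "\<dots> = b"
    using assms by (simp add: Simplex_def sum_distrib_right[symmetric])
  finally show ?case .
qed

text \<open>Integrability is inherited from that of \<open>\<ell>(Y, f\<^sub>0(X))\<close> through the Lipschitz bound.\<close>
lemma integrable_loss_agg:
  assumes "\<theta> \<in> Simplex M"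
  shows "integrable P (\<lambda>\<omega>. ell (Y \<omega>) (agg f M \<theta> (X \<omega>)))"
proof (rule Bochner_Integration.integrable_bound)
  have M_pos: "0 < M" using assms by (rule Simplex_member_imp_pos)
  show "integrable P (\<lambda>\<omega>. \<bar>ell (Y \<omega>) (f 0 (X \<omega>))\<bar> + \<bar>C_b\<bar> * (2 * b))"
    using risk_int[OF M_pos] by auto
  show "(\<lambda>\<omega>. ell (Y \<omega>) (agg f M \<theta> (X \<omega>))) \<in> borel_measurable P"
    by (rule loss_measurable[OF agg_measurable])
  show "AE \<omega> in P. norm (ell (Y \<omega>) (agg f M \<theta> (X \<omega>)))
          \<le> norm (\<bar>ell (Y \<omega>) (f 0 (X \<omega>))\<bar> + \<bar>C_b\<bar> * (2 * b))"
    using agg_bounded_AE[OF assms] f_bdd lipschitz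
  proof eventually_elim
    case (elim \<omega>)
    define a where "a = agg f M \<theta> (X \<omega>)"
    have a: "\<bar>a\<bar> \<le> b" and f0: "\<bar>f 0 (X \<omega>)\<bar> \<le> b"
      using elim M_pos by (auto simp: a_def)
    have "\<bar>ell (Y \<omega>) a - ell (Y \<omega>) (f 0 (X \<omega>))\<bar> \<le> C_b * \<bar>a - f 0 (X \<omega>)\<bar>"
      using elim(3) a f0 by (simp add: abs_le_iff)
    also have "\<dots> \<le> \<bar>C_b\<bar> * (2 * b)"
      using a f0 by (intro mult_mono) auto
    finally show ?case using b_pos by (simp add: a_def)
  qed
qed

lemma integrable_agg_diff_square:
  assumes "\<theta> \<in> Simplex M" "\<theta>' \<in> Simplex M"
  shows "integrable P (\<lambda>\<omega>. (agg f M \<theta> (X \<omega>) - agg f M \<theta>' (X \<omega>))\<^sup>2)"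
  by (rule integrable_square_of_AE_bounded[where B = "2 * b"])
    (use agg_measurable agg_bounded_AE[OF assms(1)] agg_bounded_AE[OF assms(2)] in auto)

lemma integrable_deviation_square:
  assumes "\<theta> \<in> Simplex M" "j < M"
  shows "integrable P (\<lambda>\<omega>. (f j (X \<omega>) - agg f M \<theta> (X \<omega>))\<^sup>2)"
proof (rule integrable_square_of_AE_bounded[where B = "2 * b"])
  show "(\<lambda>\<omega>. f j (X \<omega>) - agg f M \<theta> (X \<omega>)) \<in> borel_measurable P"
    using component_measurable[OF assms(2)] agg_measurable by simp
  show "AE \<omega> in P. \<bar>f j (X \<omega>) - agg f M \<theta> (X \<omega>)\<bar> \<le> 2 * b"
    using agg_bounded_AE[OF assms(1)] f_bdd by eventually_elim (use assms(2) in force)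
qed

lemma Vvar_eq_integral:
  assumes "\<theta> \<in> Simplex M"
  shows "Vvar P X f M \<theta>
       = (\<integral>\<omega>. (\<Sum>j<M. \<theta> j * (f j (X \<omega>) - agg f M \<theta> (X \<omega>))\<^sup>2) \<partial>P)"
  unfolding Vvar_def sqnorm_def
  by (subst Bochner_Integration.integral_sum) (use integrable_deviation_square[OF assms] in auto)

lemma risk_convex_comb_le:
  assumes "\<theta> \<in> Simplex M" "\<theta>' \<in> Simplex M" "\<alpha> \<in> {0<..<1}"
  shows "risk P X Y ell f M (\<lambda>j. \<alpha> * \<theta> j + (1 - \<alpha>) * \<theta>' j)
       \<le> \<alpha> * risk P X Y ell f M \<theta> + (1 - \<alpha>) * risk P X Y ell f M \<theta>'
         - C_ell / 2 * \<alpha> * (1 - \<alpha>) * sqnorm P X (\<lambda>x. agg f M \<theta> x - agg f M \<theta>' x)"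
proof -
  define F where "F t \<omega> = agg f M t (X \<omega>)" for t \<omega>
  have ints: "integrable P (\<lambda>\<omega>. ell (Y \<omega>) (F \<theta> \<omega>))" "integrable P (\<lambda>\<omega>. ell (Y \<omega>) (F \<theta>' \<omega>))"
    "integrable P (\<lambda>\<omega>. (F \<theta> \<omega> - F \<theta>' \<omega>)\<^sup>2)"
    using integrable_loss_agg assms integrable_agg_diff_square by (auto simp: F_def)
  have "risk P X Y ell f M (\<lambda>j. \<alpha> * \<theta> j + (1 - \<alpha>) * \<theta>' j)
      \<le> (\<integral>\<omega>. \<alpha> * ell (Y \<omega>) (F \<theta> \<omega>) + (1 - \<alpha>) * ell (Y \<omega>) (F \<theta>' \<omega>)
              - C_ell / 2 * \<alpha> * (1 - \<alpha>) * (F \<theta> \<omega> - F \<theta>' \<omega>)\<^sup>2 \<partial>P)"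
    unfolding risk_def
  proof (rule integral_mono_AE)
    show "integrable P (\<lambda>\<omega>. ell (Y \<omega>) (agg f M (\<lambda>j. \<alpha> * \<theta> j + (1 - \<alpha>) * \<theta>' j) (X \<omega>)))"
      using assms by (intro integrable_loss_agg Simplex_convex_comb) auto
    show "AE \<omega> in P. ell (Y \<omega>) (agg f M (\<lambda>j. \<alpha> * \<theta> j + (1 - \<alpha>) * \<theta>' j) (X \<omega>))
        \<le> \<alpha> * ell (Y \<omega>) (F \<theta> \<omega>) + (1 - \<alpha>) * ell (Y \<omega>) (F \<theta>' \<omega>)
          - C_ell / 2 * \<alpha> * (1 - \<alpha>) * (F \<theta> \<omega> - F \<theta>' \<omega>)\<^sup>2"
      using agg_bounded_AE[OF assms(1)] agg_bounded_AE[OF assms(2)] strong_convex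
      by eventually_elim (use assms(3) in \<open>auto simp: F_def agg_convex_comb abs_le_iff\<close>)
  qed (use ints in auto)
  also have "\<dots> = \<alpha> * risk P X Y ell f M \<theta> + (1 - \<alpha>) * risk P X Y ell f M \<theta>'
         - C_ell / 2 * \<alpha> * (1 - \<alpha>) * sqnorm P X (\<lambda>x. agg f M \<theta> x - agg f M \<theta>' x)"
    using ints by (simp add: risk_def sqnorm_def F_def)
  finally show ?thesis .
qed

lemma risk_tilde_convex_comb_le:
  assumes "\<theta> \<in> Simplex M" "\<theta>' \<in> Simplex M" "\<alpha> \<in> {0<..<1}" "\<nu> \<le> 1"
  shows "risk_tilde P X Y ell f M \<nu> (\<lambda>j. \<alpha> * \<theta> j + (1 - \<alpha>) * \<theta>' j)
       \<le> \<alpha> * risk_tilde P X Y ell f M \<nu> \<theta> + (1 - \<alpha>) * risk_tilde P X Y ell f M \<nu> \<theta>'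
         - (1 - \<nu>) * C_ell / 2 * \<alpha> * (1 - \<alpha>) * sqnorm P X (\<lambda>x. agg f M \<theta> x - agg f M \<theta>' x)"
proof -
  have "(1 - \<nu>) * risk P X Y ell f M (\<lambda>j. \<alpha> * \<theta> j + (1 - \<alpha>) * \<theta>' j)
      \<le> (1 - \<nu>) * (\<alpha> * risk P X Y ell f M \<theta> + (1 - \<alpha>) * risk P X Y ell f M \<theta>'
         - C_ell / 2 * \<alpha> * (1 - \<alpha>) * sqnorm P X (\<lambda>x. agg f M \<theta> x - agg f M \<theta>' x))"
    using risk_convex_comb_le[OF assms(1-3)] assms(4) by (intro mult_left_mono) auto
  thus ?thesis
    unfolding risk_tilde_def sum_convex_comb_mult by (simp add: algebra_simps)
qed

lemma Vvar_convex_comb_eq: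
  assumes "\<theta> \<in> Simplex M" "\<theta>' \<in> Simplex M" "\<alpha> \<in> {0..1}"
  shows "Vvar P X f M (\<lambda>j. \<alpha> * \<theta> j + (1 - \<alpha>) * \<theta>' j)
       = \<alpha> * Vvar P X f M \<theta> + (1 - \<alpha>) * Vvar P X f M \<theta>'
         + \<alpha> * (1 - \<alpha>) * sqnorm P X (\<lambda>x. agg f M \<theta> x - agg f M \<theta>' x)"
proof -
  have sums: "(\<Sum>j<M. \<theta> j) = 1" "(\<Sum>j<M. \<theta>' j) = 1"
    using assms by (auto simp: Simplex_def)
  have ints: "integrable P (\<lambda>\<omega>. \<Sum>j<M. t j * (f j (X \<omega>) - agg f M t (X \<omega>))\<^sup>2)"
    if "t \<in> Simplex M" for t
    using integrable_deviation_square[OF that] by auto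
  show ?thesis
    unfolding Vvar_eq_integral[OF Simplex_convex_comb[OF assms]] Vvar_eq_integral[OF assms(1)]
      Vvar_eq_integral[OF assms(2)] sqnorm_def
    using ints[OF assms(1)] ints[OF assms(2)] integrable_agg_diff_square[OF assms(1,2)]
    by (simp add: agg_def weighted_variance_convex_comb[OF sums])
qed

end

theorem proposition3:
  fixes P :: "'o measure" and Mx :: "'x measure"
    and X :: "'o \<Rightarrow> 'x" and Y :: "'o \<Rightarrow> real"
    and f :: "nat \<Rightarrow> 'x \<Rightarrow> real" and M :: nat
    and ell :: "real \<Rightarrow> real \<Rightarrow> real"
    and \<pi> :: "nat \<Rightarrow> real" and b C_b C_ell \<nu> \<mu> \<beta> :: real and n :: nat
    and \<theta>star :: "nat \<Rightarrow> real"
  assumes P: "prob_space P"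
    and X_meas: "X \<in> measurable P Mx"
    and Y_meas: "Y \<in> borel_measurable P"
    and f_meas: "\<And>j. j < M \<Longrightarrow> f j \<in> borel_measurable Mx"
    and ell_meas: "(\<lambda>(y, a). ell y a) \<in> borel_measurable borel"
    and b_pos: "b > 0"
    and Y_bdd: "AE \<omega> in P. \<bar>Y \<omega>\<bar> \<le> b"
    and f_bdd: "AE \<omega> in P. \<forall>j<M. \<bar>f j (X \<omega>)\<bar> \<le> b"
    and risk_int: "\<And>j. j < M \<Longrightarrow> integrable P (\<lambda>\<omega>. ell (Y \<omega>) (f j (X \<omega>)))"
    and pi_pos: "\<And>j. j < M \<Longrightarrow> \<pi> j > 0"
    and pi_sum: "(\<Sum>j<M. \<pi> j) = 1"
    and lipschitz: "AE \<omega> in P. \<forall>a\<in>{-b..b}. \<forall>a'\<in>{-b..b}.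
                      \<bar>ell (Y \<omega>) a - ell (Y \<omega>) a'\<bar> \<le> C_b * \<bar>a - a'\<bar>"
    and C_ell_pos: "C_ell > 0"
    and strong_convex: "AE \<omega> in P. \<forall>a\<in>{-b..b}. \<forall>a'\<in>{-b..b}. \<forall>\<alpha>\<in>{0<..<1}.
          ell (Y \<omega>) (\<alpha> * a + (1 - \<alpha>) * a')
            \<le> \<alpha> * ell (Y \<omega>) a + (1 - \<alpha>) * ell (Y \<omega>) a' - C_ell / 2 * \<alpha> * (1 - \<alpha>) * (a - a')\<^sup>2"
    and n_pos: "n \<ge> 1"
    and nu: "\<nu> \<in> {0<..<1}" and mu_pos: "\<mu> > 0" and beta_pos: "\<beta> > 0"
    and star_in: "\<theta>star \<in> Simplex M"
    and star_min: "\<forall>\<theta>\<in>Simplex M.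
          risk_tilde P X Y ell f M \<nu> \<theta>star + \<mu> * Vvar P X f M \<theta>star + \<beta> / real n * Kdiv \<pi> M \<theta>star
          \<le> risk_tilde P X Y ell f M \<nu> \<theta> + \<mu> * Vvar P X f M \<theta> + \<beta> / real n * Kdiv \<pi> M \<theta>"
  shows "\<forall>\<theta>\<in>Simplex M.
           risk_tilde P X Y ell f M \<nu> \<theta> - risk_tilde P X Y ell f M \<nu> \<theta>star
           \<ge> \<mu> * (Vvar P X f M \<theta>star - Vvar P X f M \<theta>)
             + \<beta> / real n * (Kdiv \<pi> M \<theta>star - Kdiv \<pi> M \<theta>)
             + ((1 - \<nu>) * C_ell / 2 - \<mu>) * sqnorm P X (\<lambda>x. agg f M \<theta> x - agg f M \<theta>star x)"
proof
  fix \<theta> assume \<theta>: "\<theta> \<in> Simplex M"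
  interpret aggregation_setting P Mx X Y f M ell b C_b C_ell
    using P X_meas Y_meas f_meas ell_meas b_pos f_bdd risk_int lipschitz strong_convex
    by (simp add: aggregation_setting_def aggregation_setting_axioms_def)
  define \<kappa> where "\<kappa> = \<beta> / real n"
  define G where "G t = risk_tilde P X Y ell f M \<nu> t + \<mu> * Vvar P X f M t + \<kappa> * Kdiv \<pi> M t"
    for t
  define D where "D = sqnorm P X (\<lambda>x. agg f M \<theta> x - agg f M \<theta>star x)"
  have "G \<theta>star \<le> \<alpha> * G \<theta> + (1 - \<alpha>) * G \<theta>star - \<alpha> * (1 - \<alpha>) * (((1 - \<nu>) * C_ell / 2 - \<mu>) * D)"
    if \<alpha>: "\<alpha> \<in> {0<..<1}" for \<alpha>
  proof -
    have \<alpha>_closed: "\<alpha> \<in> {0..1}" using \<alpha> by simp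
    have "G \<theta>star \<le> G (\<lambda>j. \<alpha> * \<theta> j + (1 - \<alpha>) * \<theta>star j)"
      using star_min Simplex_convex_comb[OF \<theta> star_in] \<alpha> by (simp add: G_def \<kappa>_def)
    also have "\<dots> \<le> \<alpha> * G \<theta> + (1 - \<alpha>) * G \<theta>star - \<alpha> * (1 - \<alpha>) * (((1 - \<nu>) * C_ell / 2 - \<mu>) * D)"
      using risk_tilde_convex_comb_le[OF \<theta> star_in \<alpha>, of \<nu>] nu \<alpha>
      unfolding G_def D_def Vvar_convex_comb_eq[OF \<theta> star_in \<alpha>_closed] Kdiv_convex_comb
      by (simp add: algebra_simps)
    finally show ?thesis .
  qed
  hence "((1 - \<nu>) * C_ell / 2 - \<mu>) * D \<le> G \<theta> - G \<theta>star"
    by (rule gap_ge_of_segment_bound)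
  thus "risk_tilde P X Y ell f M \<nu> \<theta> - risk_tilde P X Y ell f M \<nu> \<theta>star
           \<ge> \<mu> * (Vvar P X f M \<theta>star - Vvar P X f M \<theta>)
             + \<beta> / real n * (Kdiv \<pi> M \<theta>star - Kdiv \<pi> M \<theta>)
             + ((1 - \<nu>) * C_ell / 2 - \<mu>) * sqnorm P X (\<lambda>x. agg f M \<theta> x - agg f M \<theta>star x)"
    by (simp add: G_def D_def \<kappa>_def algebra_simps)
qed

end
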